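(* Let $R,S$ be rings and $M$ an $(S,R)$-bimodule. If $M$ is a generator of ${}_S\mathcal{M}$ and the canonical map $\chi:R\to{}_S\mathrm{End}(M)$ is an epimorphism in the category of rings, then the coinduction functor $G={}_S\mathrm{Hom}(M,\bullet):{}_S\mathcal{M}\to{}_R\mathcal{M}$ is fully faithful, that is, all counit maps $\varepsilon_Q:M\otimes_R{}_S\mathrm{Hom}(M,Q)\to Q$, $\varepsilon_Q(m\otimes_R f)=(m)f$, are isomorphisms.
   Context: Left $S$-linear maps are written on the right: $(m)f$; ${}_S\mathrm{End}(M)$ is a ring with $(m)(fg)=((m)f)g$, and $\chi(r)$ is the endomorphism $m\mapsto mr$. For $Q\in{}_S\mathcal{M}$, ${}_S\mathrm{Hom}(M,Q)$ is a left $R$-module via $(m)(r\cdot f)=(mr)f$. $G$ is right adjoint to $M\otimes_R\bullet:{}_R\mathcal{M}\to{}_S\mathcal{M}$ with counit $\varepsilon$ as given. *)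

theory Defs
  imports "HOL-Algebra.Algebra" "HOL-Algebra.Free_Abelian_Groups"
begin

text \<open>Left modules over a (not necessarily commutative) ring, using the record
  type of HOL-Algebra modules (only carrier, add, zero and smult are used).\<close>

definition left_module :: "('s, 'c) ring_scheme \<Rightarrow> ('s, 'm) module \<Rightarrow> bool" where
  "left_module S M \<longleftrightarrow> ring S \<and> abelian_group M \<and> module_axioms S M"

definition right_action_axioms ::
    "('r, 'c) ring_scheme \<Rightarrow> ('s, 'm) module \<Rightarrow> ('m \<Rightarrow> 'r \<Rightarrow> 'm) \<Rightarrow> bool" where
  "right_action_axioms R M ract \<longleftrightarrow>
     (\<forall>m\<in>carrier M. \<forall>r\<in>carrier R. ract m r \<in> carrier M) \<and>
     (\<forall>m\<in>carrier M. \<forall>m'\<in>carrier M. \<forall>r\<in>carrier R.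
         ract (m \<oplus>\<^bsub>M\<^esub> m') r = ract m r \<oplus>\<^bsub>M\<^esub> ract m' r) \<and>
     (\<forall>m\<in>carrier M. \<forall>r\<in>carrier R. \<forall>r'\<in>carrier R.
         ract m (r \<oplus>\<^bsub>R\<^esub> r') = ract m r \<oplus>\<^bsub>M\<^esub> ract m r') \<and>
     (\<forall>m\<in>carrier M. \<forall>r\<in>carrier R. \<forall>r'\<in>carrier R.
         ract m (r \<otimes>\<^bsub>R\<^esub> r') = ract (ract m r) r') \<and>
     (\<forall>m\<in>carrier M. ract m \<one>\<^bsub>R\<^esub> = m)"

definition bimodule ::
    "('s, 'c) ring_scheme \<Rightarrow> ('r, 'd) ring_scheme \<Rightarrow> ('s, 'm) module \<Rightarrow> ('m \<Rightarrow> 'r \<Rightarrow> 'm) \<Rightarrow> bool" where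
  "bimodule S R M ract \<longleftrightarrow> left_module S M \<and> ring R \<and> right_action_axioms R M ract \<and>
     (\<forall>s\<in>carrier S. \<forall>m\<in>carrier M. \<forall>r\<in>carrier R.
        ract (s \<odot>\<^bsub>M\<^esub> m) r = s \<odot>\<^bsub>M\<^esub> ract m r)"

text \<open>Left S-linear maps M \<rightarrow> Q (the value (m)f is f m), extensional on carrier M.\<close>

definition lin_hom :: "('s, 'c) ring_scheme \<Rightarrow> ('s, 'm) module \<Rightarrow> ('s, 'q) module \<Rightarrow> ('m \<Rightarrow> 'q) set" where
  "lin_hom S M Q = {f. f \<in> carrier M \<rightarrow> carrier Q \<and> f \<in> extensional (carrier M) \<and>
     (\<forall>x\<in>carrier M. \<forall>y\<in>carrier M. f (x \<oplus>\<^bsub>M\<^esub> y) = f x \<oplus>\<^bsub>Q\<^esub> f y) \<and>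
     (\<forall>s\<in>carrier S. \<forall>x\<in>carrier M. f (s \<odot>\<^bsub>M\<^esub> x) = s \<odot>\<^bsub>Q\<^esub> f x)}"

text \<open>The ring End_S(M), with (m)(fg) = ((m)f)g.\<close>

definition End_ring :: "('s, 'c) ring_scheme \<Rightarrow> ('s, 'm) module \<Rightarrow> ('m \<Rightarrow> 'm) ring" where
  "End_ring S M = \<lparr>carrier = lin_hom S M M,
     monoid.mult = (\<lambda>f g. \<lambda>m\<in>carrier M. g (f m)),
     one = (\<lambda>m\<in>carrier M. m),
     ring.zero = (\<lambda>m\<in>carrier M. \<zero>\<^bsub>M\<^esub>),
     ring.add = (\<lambda>f g. \<lambda>m\<in>carrier M. f m \<oplus>\<^bsub>M\<^esub> g m)\<rparr>"

definition chi :: "('s, 'm) module \<Rightarrow> ('m \<Rightarrow> 'r \<Rightarrow> 'm) \<Rightarrow> 'r \<Rightarrow> ('m \<Rightarrow> 'm)" where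
  "chi M ract r = (\<lambda>m\<in>carrier M. ract m r)"

definition Hom_module ::
    "('r, 'd) ring_scheme \<Rightarrow> ('s, 'c) ring_scheme \<Rightarrow> ('s, 'm) module \<Rightarrow> ('m \<Rightarrow> 'r \<Rightarrow> 'm)
       \<Rightarrow> ('s, 'q) module \<Rightarrow> ('r, 'm \<Rightarrow> 'q) module" where
  "Hom_module R S M ract Q = \<lparr>carrier = lin_hom S M Q,
     monoid.mult = undefined, one = undefined,
     ring.zero = (\<lambda>m\<in>carrier M. \<zero>\<^bsub>Q\<^esub>),
     ring.add = (\<lambda>f g. \<lambda>m\<in>carrier M. f m \<oplus>\<^bsub>Q\<^esub> g m),
     smult = (\<lambda>r f. \<lambda>m\<in>carrier M. f (ract m r))\<rparr>"

text \<open>Tensor product M \<otimes>_R N of a right R-module (M, ract) and a left R-module N,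
  as an abelian group: free abelian group on carrier M \<times> carrier N modulo the
  subgroup generated by the bilinearity and balancing relations.\<close>

definition tensor_rels ::
    "('r, 'd) ring_scheme \<Rightarrow> ('s, 'm) module \<Rightarrow> ('m \<Rightarrow> 'r \<Rightarrow> 'm) \<Rightarrow> ('r, 'n) module
       \<Rightarrow> ('m \<times> 'n \<Rightarrow>\<^sub>0 int) set" where
  "tensor_rels R M ract N =
     {Poly_Mapping.single (m \<oplus>\<^bsub>M\<^esub> m', n) 1 - Poly_Mapping.single (m, n) 1 - Poly_Mapping.single (m', n) 1
        | m m' n. m \<in> carrier M \<and> m' \<in> carrier M \<and> n \<in> carrier N} \<union>
     {Poly_Mapping.single (m, n \<oplus>\<^bsub>N\<^esub> n') 1 - Poly_Mapping.single (m, n) 1 - Poly_Mapping.single (m, n') 1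
        | m n n'. m \<in> carrier M \<and> n \<in> carrier N \<and> n' \<in> carrier N} \<union>
     {Poly_Mapping.single (ract m r, n) 1 - Poly_Mapping.single (m, r \<odot>\<^bsub>N\<^esub> n) 1
        | m r n. m \<in> carrier M \<and> r \<in> carrier R \<and> n \<in> carrier N}"

definition tensor_group ::
    "('r, 'd) ring_scheme \<Rightarrow> ('s, 'm) module \<Rightarrow> ('m \<Rightarrow> 'r \<Rightarrow> 'm) \<Rightarrow> ('r, 'n) module
       \<Rightarrow> ('m \<times> 'n \<Rightarrow>\<^sub>0 int) set monoid" where
  "tensor_group R M ract N =
     free_Abelian_group (carrier M \<times> carrier N)
       Mod generate (free_Abelian_group (carrier M \<times> carrier N)) (tensor_rels R M ract N)"

definition tens ::
    "('r, 'd) ring_scheme \<Rightarrow> ('s, 'm) module \<Rightarrow> ('m \<Rightarrow> 'r \<Rightarrow> 'm) \<Rightarrow> ('r, 'n) module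
       \<Rightarrow> 'm \<Rightarrow> 'n \<Rightarrow> ('m \<times> 'n \<Rightarrow>\<^sub>0 int) set" where
  "tens R M ract N m n =
     generate (free_Abelian_group (carrier M \<times> carrier N)) (tensor_rels R M ract N)
       #>\<^bsub>free_Abelian_group (carrier M \<times> carrier N)\<^esub> Poly_Mapping.single (m, n) 1"

text \<open>M is a generator of the category of left S-modules if it
  generates every left S-module; the test modules range over carriers of the type
  given by the itself-argument.\<close>

definition generates :: "('s, 'c) ring_scheme \<Rightarrow> ('s, 'm) module \<Rightarrow> ('s, 'n) module \<Rightarrow> bool" where
  "generates S M N \<longleftrightarrow>
     carrier N = generate (add_monoid N) (\<Union>f\<in>lin_hom S M N. f ` carrier M)"

definition generator :: "('s, 'c) ring_scheme \<Rightarrow> ('s, 'm) module \<Rightarrow> 'n itself \<Rightarrow> bool" where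
  "generator S M _ \<longleftrightarrow> (\<forall>N :: ('s, 'n) module. left_module S N \<longrightarrow> generates S M N)"

text \<open>Epimorphism in the category of rings (test rings with carrier in type 't).\<close>

definition ring_epi ::
    "('a, 'c) ring_scheme \<Rightarrow> ('b, 'd) ring_scheme \<Rightarrow> ('a \<Rightarrow> 'b) \<Rightarrow> 't itself \<Rightarrow> bool" where
  "ring_epi A B f _ \<longleftrightarrow> f \<in> ring_hom A B \<and>
     (\<forall>T :: 't ring. ring T \<longrightarrow>
        (\<forall>g\<in>ring_hom B T. \<forall>h\<in>ring_hom B T.
           (\<forall>a\<in>carrier A. g (f a) = h (f a)) \<longrightarrow> (\<forall>b\<in>carrier B. g b = h b)))"

end

theory Submission
  imports Defs
begin

text \<open>
  Write \<open>E = End\<^sub>S(M)\<close> and \<open>H = Hom\<^sub>S(M, Q)\<close>. Because \<open>\<chi> : R \<rightarrow> E\<close> is an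
  epimorphism, \<open>e \<otimes> 1 = 1 \<otimes> e\<close> in \<open>E \<otimes>\<^sub>R E\<close>: the derivation \<open>e \<mapsto> e \<otimes> 1 - 1 \<otimes> e\<close>
  into the bimodule \<open>E \<otimes>\<^sub>R E\<close> gives a ring homomorphism from \<open>E\<close> to the trivial
  extension \<open>E \<ltimes> (E \<otimes>\<^sub>R E)\<close> that agrees with the inclusion \<open>e \<mapsto> (e, 0)\<close> on
  \<open>\<chi>(R)\<close>, so the derivation vanishes.
  Hence \<open>M \<otimes>\<^sub>R H\<close> is balanced over \<open>E\<close>, not only over \<open>R\<close>.

  Say that \<open>\<epsilon>\<close> is invertible up to \<open>s \<in> S\<close> if some additive \<open>\<theta> : Q \<rightarrow> M \<otimes>\<^sub>R H\<close>
  satisfies \<open>\<epsilon>(\<theta> q) = s q\<close> and \<open>\<theta>(\<epsilon>(m \<otimes> f)) = s m \<otimes> f\<close>. The set of such \<open>s\<close> is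
  closed under addition, and for \<open>\<phi> : M \<rightarrow> S\<close> and \<open>n \<in> M\<close> it contains \<open>\<phi>(n)\<close>, via
  \<open>\<theta> q = n \<otimes> \<phi>(-) q\<close>, by \<open>E\<close>-balancedness applied to the endomorphism \<open>\<phi>(-) m\<close>.
  Since \<open>M\<close> generates \<open>S\<close>, these values generate \<open>S\<close> additively, so \<open>\<epsilon>\<close> is
  invertible up to \<open>1\<close>, that is, invertible.
\<close>

section \<open>Tensor products\<close>

lemma hom_lambda_id: "(\<lambda>x. x) \<in> hom G G"
  by (rule homI) simp_all

lemma hom_lambda_comp: "\<lbrakk>f \<in> hom H K; g \<in> hom G H\<rbrakk> \<Longrightarrow> (\<lambda>x. f (g x)) \<in> hom G K"
  using hom_compose[of g G H f K] by (simp add: comp_def)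

locale tensor_product =
  fixes R :: "('r, 'd) ring_scheme" and M :: "('s, 'm) module" and ract :: "'m \<Rightarrow> 'r \<Rightarrow> 'm"
    and N :: "('r, 'n) module"
  assumes add_closed_left: "\<lbrakk>m \<in> carrier M; m' \<in> carrier M\<rbrakk> \<Longrightarrow> m \<oplus>\<^bsub>M\<^esub> m' \<in> carrier M"
    and add_closed_right: "\<lbrakk>n \<in> carrier N; n' \<in> carrier N\<rbrakk> \<Longrightarrow> n \<oplus>\<^bsub>N\<^esub> n' \<in> carrier N"
    and ract_closed: "\<lbrakk>m \<in> carrier M; r \<in> carrier R\<rbrakk> \<Longrightarrow> ract m r \<in> carrier M"
    and smult_closed: "\<lbrakk>r \<in> carrier R; n \<in> carrier N\<rbrakk> \<Longrightarrow> r \<odot>\<^bsub>N\<^esub> n \<in> carrier N"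
begin

abbreviation "Free \<equiv> free_Abelian_group (carrier M \<times> carrier N)"
abbreviation "Rel \<equiv> generate Free (tensor_rels R M ract N)"
abbreviation "TG \<equiv> tensor_group R M ract N"
abbreviation "tensor \<equiv> tens R M ract N"

lemma tensor_rels_subset: "tensor_rels R M ract N \<subseteq> carrier Free"
  unfolding tensor_rels_def
  by (auto simp: add_closed_left add_closed_right ract_closed smult_closed
           dest!: subsetD[OF keys_diff] subsetD[OF keys_add])

lemma subgroup_Rel: "subgroup Rel Free"
  by (rule group.generate_is_subgroup[OF group_free_Abelian_group tensor_rels_subset])

lemma normal_Rel: "Rel \<lhd> Free"
  by (rule comm_group.subgroup_imp_normal[OF abelian_free_Abelian_group subgroup_Rel])

lemma comm_group_TG: "comm_group TG"
  unfolding tensor_group_def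
  by (rule comm_group.abelian_FactGroup[OF abelian_free_Abelian_group subgroup_Rel])

sublocale TG: comm_group TG
  by (rule comm_group_TG)

lemma coset_hom_TG: "(\<lambda>x. Rel #>\<^bsub>Free\<^esub> x) \<in> hom Free TG"
  unfolding tensor_group_def by (rule normal.r_coset_hom_Mod[OF normal_Rel])

lemma carrier_TG: "carrier TG = (\<lambda>x. Rel #>\<^bsub>Free\<^esub> x) ` carrier Free"
  unfolding tensor_group_def by (rule carrier_FactGroup)

lemma tensor_eq_coset: "tensor m n = Rel #>\<^bsub>Free\<^esub> frag_of (m, n)"
  by (simp add: tens_def)

lemma tensor_closed: "\<lbrakk>m \<in> carrier M; n \<in> carrier N\<rbrakk> \<Longrightarrow> tensor m n \<in> carrier TG"
  unfolding tensor_eq_coset carrier_TG by simp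

lemma coset_eqI:
  assumes "x \<in> carrier Free" "y \<in> carrier Free" "x - y \<in> Rel"
  shows "Rel #>\<^bsub>Free\<^esub> x = Rel #>\<^bsub>Free\<^esub> y"
proof -
  have "y - x \<in> Rel"
    using subgroup.m_inv_closed[OF subgroup_Rel assms(3)] assms(1,2)
    by (simp add: keys_diff subset_trans[OF keys_diff])
  then have "(y - x) \<otimes>\<^bsub>Free\<^esub> x \<in> Rel #>\<^bsub>Free\<^esub> x"
    using assms(1) subgroup.subset[OF subgroup_Rel] by (intro group.rcosI) simp_all
  then show ?thesis
    using assms(1) by (intro group.repr_independence[OF _ _ _ subgroup_Rel]) simp_all
qed

lemma tensor_eqI:
  assumes "m \<in> carrier M" "n \<in> carrier N" "x \<in> carrier Free"
    and "frag_of (m, n) - x \<in> tensor_rels R M ract N"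
  shows "tensor m n = Rel #>\<^bsub>Free\<^esub> x"
  unfolding tensor_eq_coset using assms by (intro coset_eqI) (auto intro: generate.incl)

lemma coset_mult_TG:
  "\<lbrakk>x \<in> carrier Free; y \<in> carrier Free\<rbrakk> \<Longrightarrow>
     (Rel #>\<^bsub>Free\<^esub> x) \<otimes>\<^bsub>TG\<^esub> (Rel #>\<^bsub>Free\<^esub> y) = Rel #>\<^bsub>Free\<^esub> (x + y)"
  unfolding tensor_group_def using normal.rcos_sum[OF normal_Rel] by simp

lemma tensor_add_left:
  assumes "m \<in> carrier M" "m' \<in> carrier M" "n \<in> carrier N"
  shows "tensor (m \<oplus>\<^bsub>M\<^esub> m') n = tensor m n \<otimes>\<^bsub>TG\<^esub> tensor m' n"
proof -
  have "tensor m n \<otimes>\<^bsub>TG\<^esub> tensor m' n = Rel #>\<^bsub>Free\<^esub> (frag_of (m, n) + frag_of (m', n))"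
    using assms by (simp add: tensor_eq_coset coset_mult_TG)
  also have "\<dots> = tensor (m \<oplus>\<^bsub>M\<^esub> m') n"
    using assms
    by (intro tensor_eqI[symmetric])
       (auto simp: add_closed_left tensor_rels_def diff_diff_eq dest: subsetD[OF keys_add])
  finally show ?thesis ..
qed

lemma tensor_add_right:
  assumes "m \<in> carrier M" "n \<in> carrier N" "n' \<in> carrier N"
  shows "tensor m (n \<oplus>\<^bsub>N\<^esub> n') = tensor m n \<otimes>\<^bsub>TG\<^esub> tensor m n'"
proof -
  have "tensor m n \<otimes>\<^bsub>TG\<^esub> tensor m n' = Rel #>\<^bsub>Free\<^esub> (frag_of (m, n) + frag_of (m, n'))"
    using assms by (simp add: tensor_eq_coset coset_mult_TG)
  also have "\<dots> = tensor m (n \<oplus>\<^bsub>N\<^esub> n')"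
    using assms
    by (intro tensor_eqI[symmetric])
       (auto simp: add_closed_right tensor_rels_def diff_diff_eq dest: subsetD[OF keys_add])
  finally show ?thesis ..
qed

lemma tensor_ract:
  "\<lbrakk>m \<in> carrier M; r \<in> carrier R; n \<in> carrier N\<rbrakk> \<Longrightarrow> tensor (ract m r) n = tensor m (r \<odot>\<^bsub>N\<^esub> n)"
  by (subst tensor_eq_coset, rule tensor_eqI) (auto simp: ract_closed smult_closed tensor_rels_def)

definition balanced :: "('g, 'x) monoid_scheme \<Rightarrow> ('m \<Rightarrow> 'n \<Rightarrow> 'g) \<Rightarrow> bool" where
  "balanced G \<beta> \<longleftrightarrow>
     (\<forall>m\<in>carrier M. \<forall>n\<in>carrier N. \<beta> m n \<in> carrier G) \<and>
     (\<forall>m\<in>carrier M. \<forall>m'\<in>carrier M. \<forall>n\<in>carrier N. \<beta> (m \<oplus>\<^bsub>M\<^esub> m') n = \<beta> m n \<otimes>\<^bsub>G\<^esub> \<beta> m' n) \<and>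
     (\<forall>m\<in>carrier M. \<forall>n\<in>carrier N. \<forall>n'\<in>carrier N. \<beta> m (n \<oplus>\<^bsub>N\<^esub> n') = \<beta> m n \<otimes>\<^bsub>G\<^esub> \<beta> m n') \<and>
     (\<forall>m\<in>carrier M. \<forall>r\<in>carrier R. \<forall>n\<in>carrier N. \<beta> (ract m r) n = \<beta> m (r \<odot>\<^bsub>N\<^esub> n))"

lemma balancedI:
  assumes "\<And>m n. \<lbrakk>m \<in> carrier M; n \<in> carrier N\<rbrakk> \<Longrightarrow> \<beta> m n \<in> carrier G"
    and "\<And>m m' n. \<lbrakk>m \<in> carrier M; m' \<in> carrier M; n \<in> carrier N\<rbrakk> \<Longrightarrow>
           \<beta> (m \<oplus>\<^bsub>M\<^esub> m') n = \<beta> m n \<otimes>\<^bsub>G\<^esub> \<beta> m' n"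
    and "\<And>m n n'. \<lbrakk>m \<in> carrier M; n \<in> carrier N; n' \<in> carrier N\<rbrakk> \<Longrightarrow>
           \<beta> m (n \<oplus>\<^bsub>N\<^esub> n') = \<beta> m n \<otimes>\<^bsub>G\<^esub> \<beta> m n'"
    and "\<And>m r n. \<lbrakk>m \<in> carrier M; r \<in> carrier R; n \<in> carrier N\<rbrakk> \<Longrightarrow>
           \<beta> (ract m r) n = \<beta> m (r \<odot>\<^bsub>N\<^esub> n)"
  shows "balanced G \<beta>"
  using assms unfolding balanced_def by blast

lemma tensor_rels_subset_kernel:
  assumes G: "comm_group G" and \<beta>: "balanced G \<beta>" and h: "h \<in> hom Free G"
    and h_frag: "\<And>x. x \<in> carrier M \<times> carrier N \<Longrightarrow> h (frag_of x) = case_prod \<beta> x"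
  shows "tensor_rels R M ract N \<subseteq> kernel Free G h"
proof -
  interpret G: comm_group G by (rule G)
  interpret h: group_hom Free G h
    using h by (simp add: group_hom_def group_hom_axioms_def G.is_group)
  have keys_add_subset: "Poly_Mapping.keys (x + y) \<subseteq> A"
    if "Poly_Mapping.keys x \<subseteq> A" "Poly_Mapping.keys y \<subseteq> A" for x y :: "_ \<Rightarrow>\<^sub>0 int" and A
    using that keys_add[of x y] by auto
  have h_add: "h (x + y) = h x \<otimes>\<^bsub>G\<^esub> h y" if "x \<in> carrier Free" "y \<in> carrier Free" for x y
    using that h.hom_mult by simp
  have h_diff: "h (x - y) = h x \<otimes>\<^bsub>G\<^esub> inv\<^bsub>G\<^esub> h y" if "x \<in> carrier Free" "y \<in> carrier Free" for x y
    using that h.hom_mult[of x "inv\<^bsub>Free\<^esub> y"] h.hom_inv[of y] by simp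
  have "h z = \<one>\<^bsub>G\<^esub>" if z: "z \<in> tensor_rels R M ract N" for z
    using z unfolding tensor_rels_def diff_diff_eq
  proof (elim UnE CollectE exE conjE)
    fix m m' n assume "z = frag_of (m \<oplus>\<^bsub>M\<^esub> m', n) - (frag_of (m, n) + frag_of (m', n))"
      and "m \<in> carrier M" "m' \<in> carrier M" "n \<in> carrier N"
    with \<beta> show ?thesis
      by (simp add: h_diff h_add keys_add_subset h_frag add_closed_left balanced_def)
  next
    fix m n n' assume "z = frag_of (m, n \<oplus>\<^bsub>N\<^esub> n') - (frag_of (m, n) + frag_of (m, n'))"
      and "m \<in> carrier M" "n \<in> carrier N" "n' \<in> carrier N"
    with \<beta> show ?thesis
      by (simp add: h_diff h_add keys_add_subset h_frag add_closed_right balanced_def)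
  next
    fix m r n assume "z = frag_of (ract m r, n) - frag_of (m, r \<odot>\<^bsub>N\<^esub> n)"
      and "m \<in> carrier M" "r \<in> carrier R" "n \<in> carrier N"
    with \<beta> show ?thesis
      by (simp add: h_diff h_frag ract_closed smult_closed balanced_def)
  qed
  then show ?thesis
    using tensor_rels_subset unfolding kernel_def by blast
qed

lemma tensor_universal:
  assumes G: "comm_group G" and \<beta>: "balanced G \<beta>"
  shows "\<exists>\<phi>. \<phi> \<in> hom TG G \<and> (\<forall>m\<in>carrier M. \<forall>n\<in>carrier N. \<phi> (tensor m n) = \<beta> m n)"
proof -
  have \<beta>_closed: "case_prod \<beta> ` (carrier M \<times> carrier N) \<subseteq> carrier G"
    using \<beta> by (auto simp: balanced_def)
  obtain h where h: "h \<in> hom Free G"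
    and h_frag: "\<And>x. x \<in> carrier M \<times> carrier N \<Longrightarrow> h (frag_of x) = case_prod \<beta> x"
    by (rule comm_group.free_Abelian_group_universal[OF G \<beta>_closed]) blast
  interpret h: group_hom Free G h
    using h G by (simp add: group_hom_def group_hom_axioms_def comm_group.axioms(2))
  have "Rel \<subseteq> kernel Free G h"
    by (rule group.generate_subgroup_incl[OF group_free_Abelian_group
          tensor_rels_subset_kernel[OF G \<beta> h h_frag] h.subgroup_kernel])
  then obtain g where "g \<in> hom TG G" "\<And>x. x \<in> carrier Free \<Longrightarrow> g (Rel #>\<^bsub>Free\<^esub> x) = h x"
    unfolding tensor_group_def by (rule h.FactGroup_universal_kernel[OF normal_Rel]) blast
  then show ?thesis
    by (auto simp: tensor_eq_coset h_frag)
qed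

definition lift :: "('g, 'x) monoid_scheme \<Rightarrow> ('m \<Rightarrow> 'n \<Rightarrow> 'g) \<Rightarrow> ('m \<times> 'n \<Rightarrow>\<^sub>0 int) set \<Rightarrow> 'g"
  where "lift G \<beta> = (SOME \<phi>. \<phi> \<in> hom TG G \<and> (\<forall>m\<in>carrier M. \<forall>n\<in>carrier N. \<phi> (tensor m n) = \<beta> m n))"

lemma
  assumes "comm_group G" and "balanced G \<beta>"
  shows lift_hom: "lift G \<beta> \<in> hom TG G"
    and lift_tensor: "\<lbrakk>m \<in> carrier M; n \<in> carrier N\<rbrakk> \<Longrightarrow> lift G \<beta> (tensor m n) = \<beta> m n"
  using someI_ex[OF tensor_universal[OF assms]] unfolding lift_def by auto

lemma tensor_hom_eqI:
  assumes G: "group G" and \<phi>: "\<phi> \<in> hom TG G" and \<psi>: "\<psi> \<in> hom TG G"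
    and eq: "\<And>m n. \<lbrakk>m \<in> carrier M; n \<in> carrier N\<rbrakk> \<Longrightarrow> \<phi> (tensor m n) = \<psi> (tensor m n)"
    and t: "t \<in> carrier TG"
  shows "\<phi> t = \<psi> t"
proof -
  let ?\<pi> = "\<lambda>x. Rel #>\<^bsub>Free\<^esub> x"
  interpret \<phi>: group_hom Free G "\<phi> \<circ> ?\<pi>"
    using hom_compose[OF coset_hom_TG \<phi>] G by (simp add: group_hom_def group_hom_axioms_def)
  interpret \<psi>: group_hom Free G "\<psi> \<circ> ?\<pi>"
    using hom_compose[OF coset_hom_TG \<psi>] G by (simp add: group_hom_def group_hom_axioms_def)
  obtain x where x: "x \<in> carrier Free" and t_eq: "t = ?\<pi> x"
    using t carrier_TG by blast
  have "(\<phi> \<circ> ?\<pi>) x = (\<psi> \<circ> ?\<pi>) x"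
  proof (rule free_Abelian_group_induct[of x "carrier M \<times> carrier N"])
    show "Poly_Mapping.keys x \<subseteq> carrier M \<times> carrier N"
      using x by simp
    show "(\<phi> \<circ> ?\<pi>) 0 = (\<psi> \<circ> ?\<pi>) 0"
      using \<phi>.hom_one \<psi>.hom_one by simp
  next
    fix y z :: "'m \<times> 'n \<Rightarrow>\<^sub>0 int"
    assume "Poly_Mapping.keys y \<subseteq> carrier M \<times> carrier N" "Poly_Mapping.keys z \<subseteq> carrier M \<times> carrier N"
      and "(\<phi> \<circ> ?\<pi>) y = (\<psi> \<circ> ?\<pi>) y" "(\<phi> \<circ> ?\<pi>) z = (\<psi> \<circ> ?\<pi>) z"
    then show "(\<phi> \<circ> ?\<pi>) (y - z) = (\<psi> \<circ> ?\<pi>) (y - z)"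
      using \<phi>.hom_mult[of y "inv\<^bsub>Free\<^esub> z"] \<psi>.hom_mult[of y "inv\<^bsub>Free\<^esub> z"]
        \<phi>.hom_inv[of z] \<psi>.hom_inv[of z]
      by simp
  next
    fix a assume "a \<in> carrier M \<times> carrier N"
    then show "(\<phi> \<circ> ?\<pi>) (frag_of a) = (\<psi> \<circ> ?\<pi>) (frag_of a)"
      using eq[of "fst a" "snd a"] by (cases a) (simp add: tensor_eq_coset)
  qed
  then show ?thesis
    using t_eq by simp
qed

lemma tensor_group_hom_left:
  assumes "abelian_group M" and "n \<in> carrier N"
  shows "group_hom (add_monoid M) TG (\<lambda>m. tensor m n)"
proof -
  interpret M: abelian_group M by (rule assms(1))
  show ?thesis
    unfolding group_hom_def group_hom_axioms_def
    using assms(2) by (auto intro!: homI simp: M.a_group TG.is_group tensor_closed tensor_add_left)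
qed

lemma tensor_minus_left:
  assumes "abelian_group M" and "m \<in> carrier M" and "n \<in> carrier N"
  shows "tensor (\<ominus>\<^bsub>M\<^esub> m) n = inv\<^bsub>TG\<^esub> tensor m n"
  using group_hom.hom_inv[OF tensor_group_hom_left[OF assms(1,3)], of m] assms(2)
  by (simp add: a_inv_def)

definition tensor_sum :: "('m \<times> 'n) list \<Rightarrow> ('m \<times> 'n \<Rightarrow>\<^sub>0 int) set" where
  "tensor_sum xs = foldr (\<lambda>(m, n) t. tensor m n \<otimes>\<^bsub>TG\<^esub> t) xs \<one>\<^bsub>TG\<^esub>"

lemma tensor_sum_simps [simp]:
  "tensor_sum [] = \<one>\<^bsub>TG\<^esub>"
  "tensor_sum ((m, n) # xs) = tensor m n \<otimes>\<^bsub>TG\<^esub> tensor_sum xs"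
  by (simp_all add: tensor_sum_def)

lemma tensor_sum_closed: "set xs \<subseteq> carrier M \<times> carrier N \<Longrightarrow> tensor_sum xs \<in> carrier TG"
proof (induction xs)
  case (Cons x xs)
  then show ?case
    by (cases x) (simp add: tensor_closed)
qed simp

lemma tensor_sum_append:
  "\<lbrakk>set xs \<subseteq> carrier M \<times> carrier N; set ys \<subseteq> carrier M \<times> carrier N\<rbrakk> \<Longrightarrow>
     tensor_sum (xs @ ys) = tensor_sum xs \<otimes>\<^bsub>TG\<^esub> tensor_sum ys"
proof (induction xs)
  case Nil
  then show ?case by (simp add: tensor_sum_closed)
next
  case (Cons x xs)
  then show ?case by (cases x) (simp add: tensor_closed tensor_sum_closed TG.m_assoc)
qed

lemma tensor_sum_inv:
  assumes "abelian_group M" and "set xs \<subseteq> carrier M \<times> carrier N"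
  shows "inv\<^bsub>TG\<^esub> tensor_sum xs = tensor_sum (map (\<lambda>(m, n). (\<ominus>\<^bsub>M\<^esub> m, n)) xs)"
  using assms(2)
proof (induction xs)
  case (Cons x xs)
  obtain m n where x: "x = (m, n)" "m \<in> carrier M" "n \<in> carrier N"
    using Cons.prems by (cases x) auto
  have "inv\<^bsub>TG\<^esub> tensor_sum (x # xs) = inv\<^bsub>TG\<^esub> tensor m n \<otimes>\<^bsub>TG\<^esub> inv\<^bsub>TG\<^esub> tensor_sum xs"
    using x Cons.prems by (simp add: TG.inv_mult tensor_closed tensor_sum_closed)
  also have "\<dots> = tensor_sum (map (\<lambda>(m, n). (\<ominus>\<^bsub>M\<^esub> m, n)) (x # xs))"
    using x Cons by (simp add: tensor_minus_left[OF assms(1)])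
  finally show ?case .
qed simp

lemma carrier_TG_tensor_sum:
  assumes "abelian_group M" and "t \<in> carrier TG"
  obtains xs where "set xs \<subseteq> carrier M \<times> carrier N" and "t = tensor_sum xs"
proof -
  interpret M: abelian_group M by (rule assms(1))
  let ?\<pi> = "\<lambda>x. Rel #>\<^bsub>Free\<^esub> x"
  interpret \<pi>: group_hom Free TG ?\<pi>
    using coset_hom_TG by (simp add: group_hom_def group_hom_axioms_def TG.is_group)
  obtain x where x: "x \<in> carrier Free" and t_eq: "t = ?\<pi> x"
    using assms(2) carrier_TG by blast
  have "\<exists>xs. set xs \<subseteq> carrier M \<times> carrier N \<and> ?\<pi> x = tensor_sum xs"
  proof (rule free_Abelian_group_induct[of x "carrier M \<times> carrier N"])
    show "Poly_Mapping.keys x \<subseteq> carrier M \<times> carrier N"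
      using x by simp
    show "\<exists>xs. set xs \<subseteq> carrier M \<times> carrier N \<and> ?\<pi> 0 = tensor_sum xs"
      using \<pi>.hom_one by (intro exI[of _ "[]"]) simp
  next
    fix y z :: "'m \<times> 'n \<Rightarrow>\<^sub>0 int"
    assume yz: "Poly_Mapping.keys y \<subseteq> carrier M \<times> carrier N"
      "Poly_Mapping.keys z \<subseteq> carrier M \<times> carrier N"
      and "\<exists>xs. set xs \<subseteq> carrier M \<times> carrier N \<and> ?\<pi> y = tensor_sum xs"
      and "\<exists>xs. set xs \<subseteq> carrier M \<times> carrier N \<and> ?\<pi> z = tensor_sum xs"
    then obtain ys zs where ys: "set ys \<subseteq> carrier M \<times> carrier N" "?\<pi> y = tensor_sum ys"
      and zs: "set zs \<subseteq> carrier M \<times> carrier N" "?\<pi> z = tensor_sum zs"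
      by blast
    let ?zs' = "map (\<lambda>(m, n). (\<ominus>\<^bsub>M\<^esub> m, n)) zs"
    have zs': "set ?zs' \<subseteq> carrier M \<times> carrier N"
      using zs(1) by auto
    have "?\<pi> (y - z) = ?\<pi> y \<otimes>\<^bsub>TG\<^esub> inv\<^bsub>TG\<^esub> ?\<pi> z"
      using yz \<pi>.hom_mult[of y "inv\<^bsub>Free\<^esub> z"] \<pi>.hom_inv[of z] by simp
    also have "\<dots> = tensor_sum (ys @ ?zs')"
      using ys zs zs' by (simp add: tensor_sum_inv[OF assms(1)] tensor_sum_append)
    finally show "\<exists>xs. set xs \<subseteq> carrier M \<times> carrier N \<and> ?\<pi> (y - z) = tensor_sum xs"
      using ys(1) zs' by (intro exI[of _ "ys @ ?zs'"]) simp
  next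
    fix a assume "a \<in> carrier M \<times> carrier N"
    then show "\<exists>xs. set xs \<subseteq> carrier M \<times> carrier N \<and> ?\<pi> (frag_of a) = tensor_sum xs"
      by (intro exI[of _ "[a]"]) (auto simp: tensor_eq_coset tensor_closed)
  qed
  then show ?thesis
    using that t_eq by blast
qed

end

section \<open>Modules and endomorphism rings\<close>

lemma lin_homI:
  assumes "\<And>m. m \<in> carrier M \<Longrightarrow> f m \<in> carrier Q"
    and "f \<in> extensional (carrier M)"
    and "\<And>x y. \<lbrakk>x \<in> carrier M; y \<in> carrier M\<rbrakk> \<Longrightarrow> f (x \<oplus>\<^bsub>M\<^esub> y) = f x \<oplus>\<^bsub>Q\<^esub> f y"
    and "\<And>s x. \<lbrakk>s \<in> carrier S; x \<in> carrier M\<rbrakk> \<Longrightarrow> f (s \<odot>\<^bsub>M\<^esub> x) = s \<odot>\<^bsub>Q\<^esub> f x"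
  shows "f \<in> lin_hom S M Q"
  using assms unfolding lin_hom_def by auto

lemma lin_homD:
  assumes "f \<in> lin_hom S M Q"
  shows "\<And>m. m \<in> carrier M \<Longrightarrow> f m \<in> carrier Q"
    and "f \<in> extensional (carrier M)"
    and "\<And>x y. \<lbrakk>x \<in> carrier M; y \<in> carrier M\<rbrakk> \<Longrightarrow> f (x \<oplus>\<^bsub>M\<^esub> y) = f x \<oplus>\<^bsub>Q\<^esub> f y"
    and "\<And>s x. \<lbrakk>s \<in> carrier S; x \<in> carrier M\<rbrakk> \<Longrightarrow> f (s \<odot>\<^bsub>M\<^esub> x) = s \<odot>\<^bsub>Q\<^esub> f x"
  using assms unfolding lin_hom_def by auto

lemma lin_hom_restrict: "f \<in> lin_hom S M Q \<Longrightarrow> (\<lambda>m\<in>carrier M. f m) = f"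
  by (simp add: extensional_restrict lin_homD(2))

lemma End_ring_simps:
  "carrier (End_ring S M) = lin_hom S M M"
  "f \<otimes>\<^bsub>End_ring S M\<^esub> g = (\<lambda>m\<in>carrier M. g (f m))"
  "\<one>\<^bsub>End_ring S M\<^esub> = (\<lambda>m\<in>carrier M. m)"
  "\<zero>\<^bsub>End_ring S M\<^esub> = (\<lambda>m\<in>carrier M. \<zero>\<^bsub>M\<^esub>)"
  "f \<oplus>\<^bsub>End_ring S M\<^esub> g = (\<lambda>m\<in>carrier M. f m \<oplus>\<^bsub>M\<^esub> g m)"
  by (simp_all add: End_ring_def)

lemma Hom_module_simps:
  "carrier (Hom_module R S M ract Q) = lin_hom S M Q"
  "f \<oplus>\<^bsub>Hom_module R S M ract Q\<^esub> g = (\<lambda>m\<in>carrier M. f m \<oplus>\<^bsub>Q\<^esub> g m)"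
  "r \<odot>\<^bsub>Hom_module R S M ract Q\<^esub> f = (\<lambda>m\<in>carrier M. f (ract m r))"
  by (simp_all add: Hom_module_def)

definition regular_module :: "('s, 'c) ring_scheme \<Rightarrow> ('s, 's) module" where
  "regular_module S = \<lparr>carrier = carrier S, monoid.mult = (\<otimes>\<^bsub>S\<^esub>), one = \<one>\<^bsub>S\<^esub>,
     ring.zero = \<zero>\<^bsub>S\<^esub>, ring.add = (\<oplus>\<^bsub>S\<^esub>), smult = (\<otimes>\<^bsub>S\<^esub>)\<rparr>"

lemma regular_module_simps:
  "carrier (regular_module S) = carrier S"
  "(\<oplus>\<^bsub>regular_module S\<^esub>) = (\<oplus>\<^bsub>S\<^esub>)"
  "\<zero>\<^bsub>regular_module S\<^esub> = \<zero>\<^bsub>S\<^esub>"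
  "s \<odot>\<^bsub>regular_module S\<^esub> x = s \<otimes>\<^bsub>S\<^esub> x"
  by (simp_all add: regular_module_def)

locale lmodule =
  fixes S :: "('s, 'c) ring_scheme" and M :: "('s, 'm) module"
  assumes left_module: "left_module S M"
begin

sublocale S: ring S
  using left_module by (simp add: left_module_def)

sublocale M: abelian_group M
  using left_module by (simp add: left_module_def)

lemma
  shows smult_closed: "\<lbrakk>a \<in> carrier S; x \<in> carrier M\<rbrakk> \<Longrightarrow> a \<odot>\<^bsub>M\<^esub> x \<in> carrier M"
    and smult_l_distr: "\<lbrakk>a \<in> carrier S; b \<in> carrier S; x \<in> carrier M\<rbrakk> \<Longrightarrow>
           (a \<oplus>\<^bsub>S\<^esub> b) \<odot>\<^bsub>M\<^esub> x = a \<odot>\<^bsub>M\<^esub> x \<oplus>\<^bsub>M\<^esub> b \<odot>\<^bsub>M\<^esub> x"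
    and smult_r_distr: "\<lbrakk>a \<in> carrier S; x \<in> carrier M; y \<in> carrier M\<rbrakk> \<Longrightarrow>
           a \<odot>\<^bsub>M\<^esub> (x \<oplus>\<^bsub>M\<^esub> y) = a \<odot>\<^bsub>M\<^esub> x \<oplus>\<^bsub>M\<^esub> a \<odot>\<^bsub>M\<^esub> y"
    and smult_assoc1: "\<lbrakk>a \<in> carrier S; b \<in> carrier S; x \<in> carrier M\<rbrakk> \<Longrightarrow>
           (a \<otimes>\<^bsub>S\<^esub> b) \<odot>\<^bsub>M\<^esub> x = a \<odot>\<^bsub>M\<^esub> (b \<odot>\<^bsub>M\<^esub> x)"
    and smult_one: "x \<in> carrier M \<Longrightarrow> \<one>\<^bsub>S\<^esub> \<odot>\<^bsub>M\<^esub> x = x"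
  using left_module by (simp_all add: left_module_def module_axioms_def)

lemma smult_group_hom_right: "a \<in> carrier S \<Longrightarrow> group_hom (add_monoid M) (add_monoid M) (\<lambda>x. a \<odot>\<^bsub>M\<^esub> x)"
  unfolding group_hom_def group_hom_axioms_def
  by (auto intro!: homI simp: M.a_group smult_closed smult_r_distr)

lemma smult_zero_right: "a \<in> carrier S \<Longrightarrow> a \<odot>\<^bsub>M\<^esub> \<zero>\<^bsub>M\<^esub> = \<zero>\<^bsub>M\<^esub>"
  using group_hom.hom_one[OF smult_group_hom_right] by simp

lemma smult_minus_right: "\<lbrakk>a \<in> carrier S; x \<in> carrier M\<rbrakk> \<Longrightarrow> a \<odot>\<^bsub>M\<^esub> (\<ominus>\<^bsub>M\<^esub> x) = \<ominus>\<^bsub>M\<^esub> (a \<odot>\<^bsub>M\<^esub> x)"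
  using group_hom.hom_inv[OF smult_group_hom_right] by (simp add: a_inv_def)

lemma lin_hom_comp:
  "\<lbrakk>f \<in> lin_hom S M N; g \<in> lin_hom S N Q\<rbrakk> \<Longrightarrow> (\<lambda>m\<in>carrier M. g (f m)) \<in> lin_hom S M Q"
  by (intro lin_homI) (auto simp: lin_homD smult_closed)

lemma lin_hom_id: "(\<lambda>m\<in>carrier M. m) \<in> lin_hom S M M"
  by (intro lin_homI) (auto simp: smult_closed)

lemma lin_hom_zero:
  assumes "lmodule S Q"
  shows "(\<lambda>m\<in>carrier M. \<zero>\<^bsub>Q\<^esub>) \<in> lin_hom S M Q"
proof -
  interpret Q: lmodule S Q by (rule assms)
  show ?thesis
    by (intro lin_homI) (auto simp: smult_closed Q.smult_zero_right)
qed

lemma lin_hom_add: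
  assumes "lmodule S Q" and f: "f \<in> lin_hom S M Q" and g: "g \<in> lin_hom S M Q"
  shows "(\<lambda>m\<in>carrier M. f m \<oplus>\<^bsub>Q\<^esub> g m) \<in> lin_hom S M Q"
proof -
  interpret Q: lmodule S Q by (rule assms(1))
  show ?thesis
    using f g by (intro lin_homI) (auto simp: lin_homD smult_closed Q.smult_r_distr Q.M.a_ac)
qed

lemma lin_hom_minus:
  assumes "lmodule S Q" and f: "f \<in> lin_hom S M Q"
  shows "(\<lambda>m\<in>carrier M. \<ominus>\<^bsub>Q\<^esub> f m) \<in> lin_hom S M Q"
proof -
  interpret Q: lmodule S Q by (rule assms(1))
  show ?thesis
    using f by (intro lin_homI) (auto simp: lin_homD smult_closed Q.smult_minus_right Q.M.minus_add)
qed

lemma lin_hom_scale: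
  assumes "lmodule S N" and \<phi>: "\<phi> \<in> lin_hom S M (regular_module S)" and y: "y \<in> carrier N"
  shows "(\<lambda>x\<in>carrier M. \<phi> x \<odot>\<^bsub>N\<^esub> y) \<in> lin_hom S M N"
proof -
  interpret N: lmodule S N by (rule assms(1))
  show ?thesis
    using lin_homD[OF \<phi>] y
    by (intro lin_homI)
       (auto simp: regular_module_simps N.smult_closed N.smult_l_distr N.smult_assoc1 smult_closed)
qed

lemma ring_End_ring: "ring (End_ring S M)"
proof (rule ringI)
  show "abelian_group (End_ring S M)"
  proof (rule abelian_groupI)
    fix f g h assume fgh: "f \<in> carrier (End_ring S M)" "g \<in> carrier (End_ring S M)"
      "h \<in> carrier (End_ring S M)"
    then show "f \<oplus>\<^bsub>End_ring S M\<^esub> g \<in> carrier (End_ring S M)"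
      by (simp add: End_ring_simps lin_hom_add lmodule_axioms)
    show "f \<oplus>\<^bsub>End_ring S M\<^esub> g \<oplus>\<^bsub>End_ring S M\<^esub> h = f \<oplus>\<^bsub>End_ring S M\<^esub> (g \<oplus>\<^bsub>End_ring S M\<^esub> h)"
      using fgh by (auto simp: End_ring_simps lin_homD M.a_assoc intro!: restrict_ext)
    show "f \<oplus>\<^bsub>End_ring S M\<^esub> g = g \<oplus>\<^bsub>End_ring S M\<^esub> f"
      using fgh by (auto simp: End_ring_simps lin_homD M.a_comm intro!: restrict_ext)
  next
    show "\<zero>\<^bsub>End_ring S M\<^esub> \<in> carrier (End_ring S M)"
      by (simp add: End_ring_simps lin_hom_zero lmodule_axioms)
  next
    fix f assume f: "f \<in> carrier (End_ring S M)"
    then show "\<zero>\<^bsub>End_ring S M\<^esub> \<oplus>\<^bsub>End_ring S M\<^esub> f = f"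
      by (auto simp: End_ring_simps lin_homD lin_hom_restrict cong: restrict_cong)
    show "\<exists>g\<in>carrier (End_ring S M). g \<oplus>\<^bsub>End_ring S M\<^esub> f = \<zero>\<^bsub>End_ring S M\<^esub>"
      using f lin_hom_minus[OF lmodule_axioms, of f]
      by (intro bexI[of _ "\<lambda>m\<in>carrier M. \<ominus>\<^bsub>M\<^esub> f m"])
         (auto simp: End_ring_simps lin_homD M.l_neg intro!: restrict_ext)
  qed
next
  show "monoid (End_ring S M)"
  proof (rule monoidI)
    fix f g h assume fgh: "f \<in> carrier (End_ring S M)" "g \<in> carrier (End_ring S M)"
      "h \<in> carrier (End_ring S M)"
    then show "f \<otimes>\<^bsub>End_ring S M\<^esub> g \<in> carrier (End_ring S M)"
      by (simp add: End_ring_simps lin_hom_comp)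
    show "f \<otimes>\<^bsub>End_ring S M\<^esub> g \<otimes>\<^bsub>End_ring S M\<^esub> h = f \<otimes>\<^bsub>End_ring S M\<^esub> (g \<otimes>\<^bsub>End_ring S M\<^esub> h)"
      using fgh by (auto simp: End_ring_simps lin_homD intro!: restrict_ext)
  next
    show "\<one>\<^bsub>End_ring S M\<^esub> \<in> carrier (End_ring S M)"
      by (simp add: End_ring_simps lin_hom_id)
  next
    fix f assume "f \<in> carrier (End_ring S M)"
    then show "\<one>\<^bsub>End_ring S M\<^esub> \<otimes>\<^bsub>End_ring S M\<^esub> f = f" "f \<otimes>\<^bsub>End_ring S M\<^esub> \<one>\<^bsub>End_ring S M\<^esub> = f"
      by (auto simp: End_ring_simps lin_homD lin_hom_restrict cong: restrict_cong)
  qed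
next
  fix f g h assume "f \<in> carrier (End_ring S M)" "g \<in> carrier (End_ring S M)" "h \<in> carrier (End_ring S M)"
  then show "(f \<oplus>\<^bsub>End_ring S M\<^esub> g) \<otimes>\<^bsub>End_ring S M\<^esub> h =
               f \<otimes>\<^bsub>End_ring S M\<^esub> h \<oplus>\<^bsub>End_ring S M\<^esub> g \<otimes>\<^bsub>End_ring S M\<^esub> h"
    and "h \<otimes>\<^bsub>End_ring S M\<^esub> (f \<oplus>\<^bsub>End_ring S M\<^esub> g) =
           h \<otimes>\<^bsub>End_ring S M\<^esub> f \<oplus>\<^bsub>End_ring S M\<^esub> h \<otimes>\<^bsub>End_ring S M\<^esub> g"
    by (auto simp: End_ring_simps lin_homD intro!: restrict_ext)
qed

end

lemma lmodule_regular_module: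
  assumes "ring S"
  shows "lmodule S (regular_module S)"
proof -
  interpret S: ring S by (rule assms)
  have "abelian_group (regular_module S)"
    by (rule abelian_groupI)
       (auto simp: regular_module_simps S.a_ac intro!: bexI[of _ "\<ominus>\<^bsub>S\<^esub> _"] S.l_neg)
  then show ?thesis
    unfolding lmodule_def left_module_def module_axioms_def
    by (simp add: regular_module_simps S.ring_axioms S.l_distr S.r_distr S.m_assoc)
qed

section \<open>Trivial extensions and derivations\<close>

locale ring_bimodule =
  E: ring E + P: comm_group P
  for E :: "('e, 'c) ring_scheme" and P :: "('p, 'x) monoid_scheme" +
  fixes lact :: "'e \<Rightarrow> 'p \<Rightarrow> 'p" and ract :: "'e \<Rightarrow> 'p \<Rightarrow> 'p"
  assumes lact_hom: "a \<in> carrier E \<Longrightarrow> lact a \<in> hom P P"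
    and ract_hom: "a \<in> carrier E \<Longrightarrow> ract a \<in> hom P P"
    and lact_add: "\<lbrakk>a \<in> carrier E; b \<in> carrier E; p \<in> carrier P\<rbrakk> \<Longrightarrow>
      lact (a \<oplus>\<^bsub>E\<^esub> b) p = lact a p \<otimes>\<^bsub>P\<^esub> lact b p"
    and ract_add: "\<lbrakk>a \<in> carrier E; b \<in> carrier E; p \<in> carrier P\<rbrakk> \<Longrightarrow>
      ract (a \<oplus>\<^bsub>E\<^esub> b) p = ract a p \<otimes>\<^bsub>P\<^esub> ract b p"
    and lact_mult: "\<lbrakk>a \<in> carrier E; b \<in> carrier E; p \<in> carrier P\<rbrakk> \<Longrightarrow>
      lact (a \<otimes>\<^bsub>E\<^esub> b) p = lact a (lact b p)"
    and ract_mult: "\<lbrakk>a \<in> carrier E; b \<in> carrier E; p \<in> carrier P\<rbrakk> \<Longrightarrow>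
      ract (a \<otimes>\<^bsub>E\<^esub> b) p = ract b (ract a p)"
    and lact_one: "p \<in> carrier P \<Longrightarrow> lact \<one>\<^bsub>E\<^esub> p = p"
    and ract_one: "p \<in> carrier P \<Longrightarrow> ract \<one>\<^bsub>E\<^esub> p = p"
    and lact_ract_commute: "\<lbrakk>a \<in> carrier E; b \<in> carrier E; p \<in> carrier P\<rbrakk> \<Longrightarrow>
      lact a (ract b p) = ract b (lact a p)"
begin

lemma lact_group_hom: "a \<in> carrier E \<Longrightarrow> group_hom P P (lact a)"
  by (simp add: group_hom_def group_hom_axioms_def lact_hom P.is_group)

lemma ract_group_hom: "a \<in> carrier E \<Longrightarrow> group_hom P P (ract a)"
  by (simp add: group_hom_def group_hom_axioms_def ract_hom P.is_group)

lemma
  assumes "a \<in> carrier E" and "p \<in> carrier P"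
  shows lact_closed: "lact a p \<in> carrier P"
    and ract_closed: "ract a p \<in> carrier P"
    and lact_inv_right: "lact a (inv\<^bsub>P\<^esub> p) = inv\<^bsub>P\<^esub> lact a p"
    and ract_inv_right: "ract a (inv\<^bsub>P\<^esub> p) = inv\<^bsub>P\<^esub> ract a p"
  using assms group_hom.hom_closed[OF lact_group_hom] group_hom.hom_closed[OF ract_group_hom]
    group_hom.hom_inv[OF lact_group_hom] group_hom.hom_inv[OF ract_group_hom]
  by auto

lemma
  assumes "a \<in> carrier E"
  shows lact_one_right: "lact a \<one>\<^bsub>P\<^esub> = \<one>\<^bsub>P\<^esub>"
    and ract_one_right: "ract a \<one>\<^bsub>P\<^esub> = \<one>\<^bsub>P\<^esub>"
  using assms group_hom.hom_one[OF lact_group_hom] group_hom.hom_one[OF ract_group_hom] by auto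

lemma
  assumes "a \<in> carrier E" and "p \<in> carrier P" and "q \<in> carrier P"
  shows lact_mult_right: "lact a (p \<otimes>\<^bsub>P\<^esub> q) = lact a p \<otimes>\<^bsub>P\<^esub> lact a q"
    and ract_mult_right: "ract a (p \<otimes>\<^bsub>P\<^esub> q) = ract a p \<otimes>\<^bsub>P\<^esub> ract a q"
  using assms group_hom.hom_mult[OF lact_group_hom] group_hom.hom_mult[OF ract_group_hom] by auto

text \<open>\<open>P\<close> is written multiplicatively, so addition in \<open>E \<ltimes> P\<close> multiplies the second
  components.\<close>

definition trivial_extension :: "('e \<times> 'p) ring" where
  "trivial_extension =
     \<lparr>carrier = carrier E \<times> carrier P,
      monoid.mult = (\<lambda>(a, p) (b, q). (a \<otimes>\<^bsub>E\<^esub> b, lact a q \<otimes>\<^bsub>P\<^esub> ract b p)),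
      one = (\<one>\<^bsub>E\<^esub>, \<one>\<^bsub>P\<^esub>),
      ring.zero = (\<zero>\<^bsub>E\<^esub>, \<one>\<^bsub>P\<^esub>),
      ring.add = (\<lambda>(a, p) (b, q). (a \<oplus>\<^bsub>E\<^esub> b, p \<otimes>\<^bsub>P\<^esub> q))\<rparr>"

lemma trivial_extension_simps:
  "carrier trivial_extension = carrier E \<times> carrier P"
  "(a, p) \<otimes>\<^bsub>trivial_extension\<^esub> (b, q) = (a \<otimes>\<^bsub>E\<^esub> b, lact a q \<otimes>\<^bsub>P\<^esub> ract b p)"
  "\<one>\<^bsub>trivial_extension\<^esub> = (\<one>\<^bsub>E\<^esub>, \<one>\<^bsub>P\<^esub>)"
  "\<zero>\<^bsub>trivial_extension\<^esub> = (\<zero>\<^bsub>E\<^esub>, \<one>\<^bsub>P\<^esub>)"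
  "(a, p) \<oplus>\<^bsub>trivial_extension\<^esub> (b, q) = (a \<oplus>\<^bsub>E\<^esub> b, p \<otimes>\<^bsub>P\<^esub> q)"
  by (simp_all add: trivial_extension_def)

lemma ring_trivial_extension: "ring trivial_extension"
proof (rule ringI)
  show "abelian_group trivial_extension"
    by (rule abelian_groupI)
       (auto simp: trivial_extension_simps E.a_ac P.m_ac
             intro!: bexI[of _ "(\<ominus>\<^bsub>E\<^esub> _, inv\<^bsub>P\<^esub> _)"])
  show "monoid trivial_extension"
    by (rule monoidI)
       (auto simp: trivial_extension_simps E.m_assoc P.m_assoc lact_closed ract_closed
             lact_mult ract_mult lact_mult_right ract_mult_right lact_ract_commute
             lact_one ract_one lact_one_right ract_one_right)
next
  fix x y z assume "x \<in> carrier trivial_extension" "y \<in> carrier trivial_extension"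
    "z \<in> carrier trivial_extension"
  then show "(x \<oplus>\<^bsub>trivial_extension\<^esub> y) \<otimes>\<^bsub>trivial_extension\<^esub> z =
               x \<otimes>\<^bsub>trivial_extension\<^esub> z \<oplus>\<^bsub>trivial_extension\<^esub> y \<otimes>\<^bsub>trivial_extension\<^esub> z"
    and "z \<otimes>\<^bsub>trivial_extension\<^esub> (x \<oplus>\<^bsub>trivial_extension\<^esub> y) =
           z \<otimes>\<^bsub>trivial_extension\<^esub> x \<oplus>\<^bsub>trivial_extension\<^esub> z \<otimes>\<^bsub>trivial_extension\<^esub> y"
    by (auto simp: trivial_extension_simps E.l_distr E.r_distr lact_add ract_add
             lact_mult_right ract_mult_right lact_closed ract_closed P.m_ac)
qed

definition derivation :: "('e \<Rightarrow> 'p) \<Rightarrow> bool" where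
  "derivation d \<longleftrightarrow> d \<in> carrier E \<rightarrow> carrier P \<and>
     (\<forall>a\<in>carrier E. \<forall>b\<in>carrier E. d (a \<oplus>\<^bsub>E\<^esub> b) = d a \<otimes>\<^bsub>P\<^esub> d b) \<and>
     (\<forall>a\<in>carrier E. \<forall>b\<in>carrier E. d (a \<otimes>\<^bsub>E\<^esub> b) = lact a (d b) \<otimes>\<^bsub>P\<^esub> ract b (d a))"

lemma derivation_one:
  assumes "derivation d"
  shows "d \<one>\<^bsub>E\<^esub> = \<one>\<^bsub>P\<^esub>"
proof -
  have d1: "d \<one>\<^bsub>E\<^esub> \<in> carrier P"
    using assms by (auto simp: derivation_def)
  have "d \<one>\<^bsub>E\<^esub> \<otimes>\<^bsub>P\<^esub> d \<one>\<^bsub>E\<^esub> = d \<one>\<^bsub>E\<^esub>"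
    using assms d1 unfolding derivation_def by (metis E.l_one E.one_closed lact_one ract_one)
  then show ?thesis
    using d1 by (simp add: P.l_cancel_one')
qed

lemma derivation_ring_hom: "derivation d \<Longrightarrow> (\<lambda>a. (a, d a)) \<in> ring_hom E trivial_extension"
  by (rule ring_hom_memI) (auto simp: trivial_extension_simps derivation_def derivation_one)

lemma derivation_trivial: "derivation (\<lambda>a. \<one>\<^bsub>P\<^esub>)"
  by (simp add: derivation_def lact_one_right ract_one_right)

end

section \<open>Ring epimorphisms\<close>

definition list_graph :: "'a list \<Rightarrow> ('a \<times> nat) set" where
  "list_graph xs = {(xs ! i, i) | i. i < length xs}"

lemma inj_list_graph: "inj list_graph"
proof (rule injI)
  fix xs ys :: "'a list" assume eq: "list_graph xs = list_graph ys"
  have "snd ` list_graph zs = {..<length zs}" for zs :: "'a list"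
    by (force simp: list_graph_def)
  then have len: "length xs = length ys"
    using eq by (metis lessThan_eq_iff)
  have "xs ! i = ys ! i" if "i < length xs" for i
  proof -
    have "(xs ! i, i) \<in> list_graph ys"
      using that eq by (auto simp: list_graph_def)
    then show ?thesis
      by (auto simp: list_graph_def)
  qed
  then show "xs = ys"
    using len by (simp add: nth_equalityI)
qed

lemma inj_concat_pairs: "inj (\<lambda>xs. concat (map (\<lambda>(a, b). [a, b]) xs))"
proof (rule injI)
  fix xs ys :: "('a \<times> 'a) list"
  show "concat (map (\<lambda>(a, b). [a, b]) xs) = concat (map (\<lambda>(a, b). [a, b]) ys) \<Longrightarrow> xs = ys"
  proof (induction xs arbitrary: ys)
    case Nil
    then show ?case by (cases ys) auto
  next
    case (Cons x xs)
    then show ?case by (cases ys) (auto split: prod.splits)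
  qed
qed

text \<open>The epimorphism property only quantifies over rings carried by the type \<open>'t\<close>,
  so \<open>T\<close> is first transported along \<open>\<iota>\<close> onto its image.\<close>

lemma ring_epi_eqI:
  fixes \<iota> :: "'a \<Rightarrow> 't"
  assumes epi: "ring_epi A B f TYPE('t)" and T: "ring T" and inj: "inj_on \<iota> (carrier T)"
    and g: "g \<in> ring_hom B T" and h: "h \<in> ring_hom B T"
    and eq: "\<And>a. a \<in> carrier A \<Longrightarrow> g (f a) = h (f a)" and b: "b \<in> carrier B"
  shows "g b = h b"
proof -
  define T' :: "'t ring" where "T' =
    \<lparr>carrier = \<iota> ` carrier T,
     monoid.mult = (\<lambda>x y. \<iota> (inv_into (carrier T) \<iota> x \<otimes>\<^bsub>T\<^esub> inv_into (carrier T) \<iota> y)),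
     one = \<iota> \<one>\<^bsub>T\<^esub>, ring.zero = \<iota> \<zero>\<^bsub>T\<^esub>,
     ring.add = (\<lambda>x y. \<iota> (inv_into (carrier T) \<iota> x \<oplus>\<^bsub>T\<^esub> inv_into (carrier T) \<iota> y))\<rparr>"
  have \<iota>: "\<iota> \<in> ring_hom T T'"
    by (rule ring_hom_memI) (simp_all add: T'_def inv_into_f_f[OF inj])
  have "ring T'"
    using ring.ring_hom_imp_img_ring[OF T \<iota>] by (simp add: T'_def)
  then have epi_T': "\<forall>g\<in>ring_hom B T'. \<forall>h\<in>ring_hom B T'.
      (\<forall>a\<in>carrier A. g (f a) = h (f a)) \<longrightarrow> (\<forall>b\<in>carrier B. g b = h b)"
    using epi unfolding ring_epi_def by blast
  have "(\<iota> \<circ> g) b = (\<iota> \<circ> h) b"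
    by (rule epi_T'[rule_format, OF ring_hom_trans[OF g \<iota>] ring_hom_trans[OF h \<iota>] _ b])
       (simp add: eq)
  then show ?thesis
    using inj_onD[OF inj] ring_hom_closed[OF g b] ring_hom_closed[OF h b] by simp
qed

locale ring_hom_tensor = R: ring R + E: ring E
  for R :: "('r, 'c) ring_scheme" and E :: "('e, 'd) ring_scheme" +
  fixes f :: "'r \<Rightarrow> 'e"
  assumes f_hom: "f \<in> ring_hom R E"
begin

definition Emod :: "('r, 'e) module" where
  "Emod = \<lparr>carrier = carrier E, monoid.mult = (\<otimes>\<^bsub>E\<^esub>), one = \<one>\<^bsub>E\<^esub>,
     ring.zero = \<zero>\<^bsub>E\<^esub>, ring.add = (\<oplus>\<^bsub>E\<^esub>), smult = (\<lambda>r a. f r \<otimes>\<^bsub>E\<^esub> a)\<rparr>"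

definition act_right :: "'e \<Rightarrow> 'r \<Rightarrow> 'e" where
  "act_right a r = a \<otimes>\<^bsub>E\<^esub> f r"

lemma Emod_simps:
  "carrier Emod = carrier E" "(\<oplus>\<^bsub>Emod\<^esub>) = (\<oplus>\<^bsub>E\<^esub>)" "\<zero>\<^bsub>Emod\<^esub> = \<zero>\<^bsub>E\<^esub>"
  "r \<odot>\<^bsub>Emod\<^esub> a = f r \<otimes>\<^bsub>E\<^esub> a"
  by (simp_all add: Emod_def)

lemma f_closed: "r \<in> carrier R \<Longrightarrow> f r \<in> carrier E"
  using f_hom by (rule ring_hom_closed)

lemma abelian_group_Emod: "abelian_group Emod"
  by (rule abelian_groupI)
     (auto simp: Emod_simps E.a_ac intro!: bexI[of _ "\<ominus>\<^bsub>E\<^esub> _"] E.l_neg)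

sublocale EE: tensor_product R Emod act_right Emod
  by unfold_locales (auto simp: Emod_simps act_right_def f_closed)

abbreviation "P \<equiv> EE.TG"

lemma tensor_closed_E: "\<lbrakk>x \<in> carrier E; y \<in> carrier E\<rbrakk> \<Longrightarrow> EE.tensor x y \<in> carrier P"
  by (rule EE.tensor_closed) (simp_all add: Emod_simps)

lemma
  assumes "x \<in> carrier E" "x' \<in> carrier E" "y \<in> carrier E"
  shows tensor_add_left_E: "EE.tensor (x \<oplus>\<^bsub>E\<^esub> x') y = EE.tensor x y \<otimes>\<^bsub>P\<^esub> EE.tensor x' y"
    and tensor_add_right_E: "EE.tensor y (x \<oplus>\<^bsub>E\<^esub> x') = EE.tensor y x \<otimes>\<^bsub>P\<^esub> EE.tensor y x'"
  using assms EE.tensor_add_left[of x x' y] EE.tensor_add_right[of y x x'] by (simp_all add: Emod_simps)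

lemma tensor_f_middle:
  "\<lbrakk>x \<in> carrier E; r \<in> carrier R; y \<in> carrier E\<rbrakk> \<Longrightarrow>
     EE.tensor (x \<otimes>\<^bsub>E\<^esub> f r) y = EE.tensor x (f r \<otimes>\<^bsub>E\<^esub> y)"
  using EE.tensor_ract[of x r y] by (simp add: Emod_simps act_right_def)

definition left_mult :: "'e \<Rightarrow> ('e \<times> 'e \<Rightarrow>\<^sub>0 int) set \<Rightarrow> ('e \<times> 'e \<Rightarrow>\<^sub>0 int) set" where
  "left_mult a = EE.lift P (\<lambda>x y. EE.tensor (a \<otimes>\<^bsub>E\<^esub> x) y)"

definition right_mult :: "'e \<Rightarrow> ('e \<times> 'e \<Rightarrow>\<^sub>0 int) set \<Rightarrow> ('e \<times> 'e \<Rightarrow>\<^sub>0 int) set" where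
  "right_mult b = EE.lift P (\<lambda>x y. EE.tensor x (y \<otimes>\<^bsub>E\<^esub> b))"

lemma balanced_left_mult: "a \<in> carrier E \<Longrightarrow> EE.balanced P (\<lambda>x y. EE.tensor (a \<otimes>\<^bsub>E\<^esub> x) y)"
  by (rule EE.balancedI)
     (simp_all add: Emod_simps act_right_def tensor_closed_E E.r_distr tensor_add_left_E
       tensor_add_right_E f_closed E.m_assoc[symmetric] tensor_f_middle)

lemma balanced_right_mult: "b \<in> carrier E \<Longrightarrow> EE.balanced P (\<lambda>x y. EE.tensor x (y \<otimes>\<^bsub>E\<^esub> b))"
  by (rule EE.balancedI)
     (simp_all add: Emod_simps act_right_def tensor_closed_E E.l_distr tensor_add_left_E
       tensor_add_right_E f_closed E.m_assoc tensor_f_middle)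

lemma
  assumes "a \<in> carrier E"
  shows left_mult_hom: "left_mult a \<in> hom P P"
    and right_mult_hom: "right_mult a \<in> hom P P"
    and left_mult_tensor: "\<lbrakk>x \<in> carrier E; y \<in> carrier E\<rbrakk> \<Longrightarrow>
           left_mult a (EE.tensor x y) = EE.tensor (a \<otimes>\<^bsub>E\<^esub> x) y"
    and right_mult_tensor: "\<lbrakk>x \<in> carrier E; y \<in> carrier E\<rbrakk> \<Longrightarrow>
           right_mult a (EE.tensor x y) = EE.tensor x (y \<otimes>\<^bsub>E\<^esub> a)"
  using EE.lift_hom[OF EE.comm_group_TG balanced_left_mult[OF assms]]
    EE.lift_hom[OF EE.comm_group_TG balanced_right_mult[OF assms]]
    EE.lift_tensor[OF EE.comm_group_TG balanced_left_mult[OF assms]]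
    EE.lift_tensor[OF EE.comm_group_TG balanced_right_mult[OF assms]]
  by (simp_all add: left_mult_def right_mult_def Emod_simps)

lemma P_hom_eqI:
  assumes "\<phi> \<in> hom P P" and "\<psi> \<in> hom P P"
    and "\<And>x y. \<lbrakk>x \<in> carrier E; y \<in> carrier E\<rbrakk> \<Longrightarrow> \<phi> (EE.tensor x y) = \<psi> (EE.tensor x y)"
    and "p \<in> carrier P"
  shows "\<phi> p = \<psi> p"
  using EE.tensor_hom_eqI[OF EE.TG.is_group assms(1,2) _ assms(4)] assms(3) by (simp add: Emod_simps)

sublocale TE: ring_bimodule E P left_mult right_mult
proof (unfold_locales; (elim left_mult_hom right_mult_hom)?)
  fix a b p assume ab: "a \<in> carrier E" "b \<in> carrier E" and p: "p \<in> carrier P"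
  show "left_mult (a \<oplus>\<^bsub>E\<^esub> b) p = left_mult a p \<otimes>\<^bsub>P\<^esub> left_mult b p"
    by (rule P_hom_eqI[OF _ EE.TG.hom_group_mult _ p])
       (simp_all add: ab left_mult_hom left_mult_tensor E.l_distr tensor_add_left_E)
  show "right_mult (a \<oplus>\<^bsub>E\<^esub> b) p = right_mult a p \<otimes>\<^bsub>P\<^esub> right_mult b p"
    by (rule P_hom_eqI[OF _ EE.TG.hom_group_mult _ p])
       (simp_all add: ab right_mult_hom right_mult_tensor E.r_distr tensor_add_right_E)
  note lm = left_mult_hom[OF ab(1)] left_mult_hom[OF ab(2)]
    and rm = right_mult_hom[OF ab(1)] right_mult_hom[OF ab(2)]
  show "left_mult (a \<otimes>\<^bsub>E\<^esub> b) p = left_mult a (left_mult b p)"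
    by (rule P_hom_eqI[OF _ hom_lambda_comp[OF lm] _ p])
       (simp_all add: ab left_mult_hom left_mult_tensor E.m_assoc)
  show "right_mult (a \<otimes>\<^bsub>E\<^esub> b) p = right_mult b (right_mult a p)"
    by (rule P_hom_eqI[OF _ hom_lambda_comp[OF rm(2,1)] _ p])
       (simp_all add: ab right_mult_hom right_mult_tensor E.m_assoc)
  show "left_mult a (right_mult b p) = right_mult b (left_mult a p)"
    by (rule P_hom_eqI[OF hom_lambda_comp[OF lm(1) rm(2)] hom_lambda_comp[OF rm(2) lm(1)] _ p])
       (simp_all add: ab left_mult_tensor right_mult_tensor)
next
  fix p assume p: "p \<in> carrier P"
  show "left_mult \<one>\<^bsub>E\<^esub> p = p"
    by (rule P_hom_eqI[OF _ hom_lambda_id _ p]) (simp_all add: left_mult_hom left_mult_tensor)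
  show "right_mult \<one>\<^bsub>E\<^esub> p = p"
    by (rule P_hom_eqI[OF _ hom_lambda_id _ p]) (simp_all add: right_mult_hom right_mult_tensor)
qed

definition tensor_commutator :: "'e \<Rightarrow> ('e \<times> 'e \<Rightarrow>\<^sub>0 int) set" where
  "tensor_commutator a = EE.tensor a \<one>\<^bsub>E\<^esub> \<otimes>\<^bsub>P\<^esub> inv\<^bsub>P\<^esub> EE.tensor \<one>\<^bsub>E\<^esub> a"

lemma derivation_tensor_commutator: "TE.derivation tensor_commutator"
  unfolding TE.derivation_def
proof (intro conjI ballI)
  show "tensor_commutator \<in> carrier E \<rightarrow> carrier P"
    by (simp add: tensor_commutator_def tensor_closed_E)
next
  fix a b assume ab: "a \<in> carrier E" "b \<in> carrier E"
  show "tensor_commutator (a \<oplus>\<^bsub>E\<^esub> b) = tensor_commutator a \<otimes>\<^bsub>P\<^esub> tensor_commutator b"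
    using ab by (simp add: tensor_commutator_def tensor_add_left_E tensor_add_right_E tensor_closed_E
                           EE.TG.inv_mult EE.TG.m_ac)
  have "left_mult a (tensor_commutator b) \<otimes>\<^bsub>P\<^esub> right_mult b (tensor_commutator a) =
          (EE.tensor (a \<otimes>\<^bsub>E\<^esub> b) \<one>\<^bsub>E\<^esub> \<otimes>\<^bsub>P\<^esub> inv\<^bsub>P\<^esub> EE.tensor a b)
          \<otimes>\<^bsub>P\<^esub> (EE.tensor a b \<otimes>\<^bsub>P\<^esub> inv\<^bsub>P\<^esub> EE.tensor \<one>\<^bsub>E\<^esub> (a \<otimes>\<^bsub>E\<^esub> b))"
    using ab by (simp add: tensor_commutator_def tensor_closed_E TE.lact_mult_right TE.ract_mult_right
                           TE.lact_inv_right TE.ract_inv_right left_mult_tensor right_mult_tensor)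
  also have "\<dots> = tensor_commutator (a \<otimes>\<^bsub>E\<^esub> b)"
    using ab by (simp add: tensor_commutator_def tensor_closed_E EE.TG.m_assoc EE.TG.inv_solve_left')
  finally show "tensor_commutator (a \<otimes>\<^bsub>E\<^esub> b) =
      left_mult a (tensor_commutator b) \<otimes>\<^bsub>P\<^esub> right_mult b (tensor_commutator a)" ..
qed

lemma tensor_commutator_f: "r \<in> carrier R \<Longrightarrow> tensor_commutator (f r) = \<one>\<^bsub>P\<^esub>"
  using tensor_f_middle[of "\<one>\<^bsub>E\<^esub>" r "\<one>\<^bsub>E\<^esub>"]
  by (simp add: tensor_commutator_def f_closed tensor_closed_E)

text \<open>Every element of \<open>E \<otimes>\<^sub>R E\<close> is a sum of simple tensors; listing the factors of such
  a sum after the first component embeds \<open>E \<ltimes> (E \<otimes>\<^sub>R E)\<close> into the test type of the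
  epimorphism property.\<close>

lemma ex_inj_on_trivial_extension:
  "\<exists>\<iota> :: 'e \<times> ('e \<times> 'e \<Rightarrow>\<^sub>0 int) set \<Rightarrow> ('e \<times> nat) set. inj_on \<iota> (carrier TE.trivial_extension)"
proof -
  define rep where "rep t = (SOME xs. set xs \<subseteq> carrier E \<times> carrier E \<and> t = EE.tensor_sum xs)" for t
  have rep: "t = EE.tensor_sum (rep t)" if t: "t \<in> carrier P" for t
  proof -
    obtain xs where "set xs \<subseteq> carrier E \<times> carrier E" "t = EE.tensor_sum xs"
      using EE.carrier_TG_tensor_sum[OF abelian_group_Emod t] by (auto simp: Emod_simps)
    then show ?thesis
      unfolding rep_def by (metis (mono_tags, lifting) someI)
  qed
  let ?\<iota> = "\<lambda>x. list_graph (fst x # concat (map (\<lambda>(a, b). [a, b]) (rep (snd x))))"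
  have "inj_on ?\<iota> (carrier E \<times> carrier P)"
  proof (rule inj_onI)
    fix x y assume x: "x \<in> carrier E \<times> carrier P" and y: "y \<in> carrier E \<times> carrier P"
      and "?\<iota> x = ?\<iota> y"
    then have "fst x = fst y \<and> concat (map (\<lambda>(a, b). [a, b]) (rep (snd x))) =
                                concat (map (\<lambda>(a, b). [a, b]) (rep (snd y)))"
      using injD[OF inj_list_graph] by blast
    then have "fst x = fst y" "rep (snd x) = rep (snd y)"
      using injD[OF inj_concat_pairs] by auto
    then show "x = y"
      using x y rep by (metis mem_Times_iff prod_eqI)
  qed
  then show ?thesis
    by (auto simp: TE.trivial_extension_simps)
qed

theorem tensor_one_commute:
  assumes epi: "ring_epi R E f TYPE(('e \<times> nat) set)" and a: "a \<in> carrier E"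
  shows "EE.tensor a \<one>\<^bsub>E\<^esub> = EE.tensor \<one>\<^bsub>E\<^esub> a"
proof -
  obtain \<iota> :: "_ \<Rightarrow> ('e \<times> nat) set" where \<iota>: "inj_on \<iota> (carrier TE.trivial_extension)"
    using ex_inj_on_trivial_extension by blast
  have "(a, tensor_commutator a) = (a, \<one>\<^bsub>P\<^esub>)"
    by (rule ring_epi_eqI[OF epi TE.ring_trivial_extension \<iota>
          TE.derivation_ring_hom[OF derivation_tensor_commutator]
          TE.derivation_ring_hom[OF TE.derivation_trivial] _ a])
       (simp add: tensor_commutator_f)
  then have "\<one>\<^bsub>P\<^esub> = EE.tensor a \<one>\<^bsub>E\<^esub> \<otimes>\<^bsub>P\<^esub> inv\<^bsub>P\<^esub> EE.tensor \<one>\<^bsub>E\<^esub> a"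
    by (simp add: tensor_commutator_def)
  then show ?thesis
    using a by (simp add: EE.TG.inv_solve_right tensor_closed_E)
qed

end

section \<open>The counit of coinduction\<close>

locale coinduction = M: lmodule S M + Q: lmodule S Q
  for S :: "('s, 'c) ring_scheme" and M :: "('s, 'm) module" and Q :: "('s, 'q) module" +
  fixes R :: "('r, 'd) ring_scheme" and ract :: "'m \<Rightarrow> 'r \<Rightarrow> 'm"
  assumes bimodule: "bimodule S R M ract"
    and chi_hom: "chi M ract \<in> ring_hom R (End_ring S M)"
begin

abbreviation "H \<equiv> Hom_module R S M ract Q"

lemma ring_R: "ring R"
  using bimodule by (simp add: bimodule_def)

lemma ract_closed: "\<lbrakk>m \<in> carrier M; r \<in> carrier R\<rbrakk> \<Longrightarrow> ract m r \<in> carrier M"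
  using bimodule by (simp add: bimodule_def right_action_axioms_def)

lemma chi_closed: "r \<in> carrier R \<Longrightarrow> chi M ract r \<in> lin_hom S M M"
  using ring_hom_closed[OF chi_hom] by (simp add: End_ring_simps)

lemma Hom_smult_closed:
  assumes "h \<in> lin_hom S M Q" and "r \<in> carrier R"
  shows "(\<lambda>m\<in>carrier M. h (ract m r)) \<in> lin_hom S M Q"
proof -
  have "(\<lambda>m\<in>carrier M. h (ract m r)) = (\<lambda>m\<in>carrier M. h (chi M ract r m))"
    by (rule restrict_ext) (simp add: chi_def)
  then show ?thesis
    using M.lin_hom_comp[OF chi_closed assms(1)] assms(2) by simp
qed

sublocale MH: tensor_product R M ract H
  by unfold_locales
     (simp_all add: Hom_module_simps ract_closed Hom_smult_closed M.lin_hom_add Q.lmodule_axioms)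

sublocale EM: ring_hom_tensor R "End_ring S M" "chi M ract"
  by (intro ring_hom_tensor.intro ring_R M.ring_End_ring ring_hom_tensor_axioms.intro chi_hom)

definition precomp :: "('m \<Rightarrow> 'm) \<Rightarrow> ('m \<Rightarrow> 'q) \<Rightarrow> 'm \<Rightarrow> 'q" where
  "precomp e h = (\<lambda>m\<in>carrier M. h (e m))"

lemma precomp_closed: "\<lbrakk>e \<in> lin_hom S M M; h \<in> lin_hom S M Q\<rbrakk> \<Longrightarrow> precomp e h \<in> lin_hom S M Q"
  unfolding precomp_def by (rule M.lin_hom_comp)

lemma precomp_id: "h \<in> lin_hom S M Q \<Longrightarrow> precomp (\<lambda>m\<in>carrier M. m) h = h"
  by (simp add: precomp_def lin_hom_restrict cong: restrict_cong)

lemma precomp_add: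
  "\<lbrakk>e \<in> lin_hom S M M; e' \<in> lin_hom S M M; h \<in> lin_hom S M Q\<rbrakk> \<Longrightarrow>
     precomp (e \<oplus>\<^bsub>End_ring S M\<^esub> e') h = precomp e h \<oplus>\<^bsub>H\<^esub> precomp e' h"
  by (auto simp: precomp_def End_ring_simps Hom_module_simps lin_homD intro!: restrict_ext)

lemma precomp_chi:
  "\<lbrakk>r \<in> carrier R; e \<in> lin_hom S M M\<rbrakk> \<Longrightarrow>
     precomp (chi M ract r \<otimes>\<^bsub>End_ring S M\<^esub> e) h = r \<odot>\<^bsub>H\<^esub> precomp e h"
  by (auto simp: precomp_def End_ring_simps Hom_module_simps chi_def ract_closed intro!: restrict_ext)

lemma tensor_End_balanced:
  assumes epi: "ring_epi R (End_ring S M) (chi M ract) TYPE((('m \<Rightarrow> 'm) \<times> nat) set)"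
    and x: "x \<in> carrier M" and e: "e \<in> lin_hom S M M" and h: "h \<in> lin_hom S M Q"
  shows "MH.tensor (e x) h = MH.tensor x (precomp e h)"
proof -
  let ?\<beta> = "\<lambda>a b. MH.tensor (a x) (precomp b h)"
  have \<beta>: "EM.EE.balanced MH.TG ?\<beta>"
  proof (rule EM.EE.balancedI, unfold EM.Emod_simps End_ring_simps(1))
    fix a b assume "a \<in> lin_hom S M M" "b \<in> lin_hom S M M"
    then show "?\<beta> a b \<in> carrier MH.TG"
      using x h by (simp add: MH.tensor_closed Hom_module_simps precomp_closed lin_homD)
  next
    fix a a' b assume "a \<in> lin_hom S M M" "a' \<in> lin_hom S M M" "b \<in> lin_hom S M M"
    then show "?\<beta> (a \<oplus>\<^bsub>End_ring S M\<^esub> a') b = ?\<beta> a b \<otimes>\<^bsub>MH.TG\<^esub> ?\<beta> a' b"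
      using x h by (simp add: End_ring_simps MH.tensor_add_left Hom_module_simps precomp_closed lin_homD)
  next
    fix a b b' assume "a \<in> lin_hom S M M" "b \<in> lin_hom S M M" "b' \<in> lin_hom S M M"
    then show "?\<beta> a (b \<oplus>\<^bsub>End_ring S M\<^esub> b') = ?\<beta> a b \<otimes>\<^bsub>MH.TG\<^esub> ?\<beta> a b'"
      using x h by (simp add: precomp_add MH.tensor_add_right Hom_module_simps(1) precomp_closed lin_homD)
  next
    fix a r b assume a: "a \<in> lin_hom S M M" and r: "r \<in> carrier R" and b: "b \<in> lin_hom S M M"
    have "EM.act_right a r x = ract (a x) r"
      using x a by (simp add: EM.act_right_def End_ring_simps chi_def lin_homD)
    then show "?\<beta> (EM.act_right a r) b = ?\<beta> a (chi M ract r \<otimes>\<^bsub>End_ring S M\<^esub> b)"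
      using x h a r b
      by (simp add: precomp_chi MH.tensor_ract Hom_module_simps precomp_closed lin_homD)
  qed
  have "EM.EE.lift MH.TG ?\<beta> (EM.EE.tensor e \<one>\<^bsub>End_ring S M\<^esub>) =
        EM.EE.lift MH.TG ?\<beta> (EM.EE.tensor \<one>\<^bsub>End_ring S M\<^esub> e)"
    using EM.tensor_one_commute[OF epi] e by (simp add: End_ring_simps)
  then show ?thesis
    using EM.EE.lift_tensor[OF MH.comm_group_TG \<beta>] e x h M.lin_hom_id
    by (simp add: EM.Emod_simps End_ring_simps precomp_id)
qed

definition counit :: "('m \<times> ('m \<Rightarrow> 'q) \<Rightarrow>\<^sub>0 int) set \<Rightarrow> 'q" where
  "counit = MH.lift (add_monoid Q) (\<lambda>m h. h m)"

lemma balanced_evaluation: "MH.balanced (add_monoid Q) (\<lambda>m h. h m)"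
  by (rule MH.balancedI) (simp_all add: Hom_module_simps lin_homD)

lemma counit_hom: "counit \<in> hom MH.TG (add_monoid Q)"
  unfolding counit_def by (rule MH.lift_hom[OF Q.M.a_comm_group balanced_evaluation])

lemma counit_tensor: "\<lbrakk>m \<in> carrier M; h \<in> lin_hom S M Q\<rbrakk> \<Longrightarrow> counit (MH.tensor m h) = h m"
  unfolding counit_def using MH.lift_tensor[OF Q.M.a_comm_group balanced_evaluation]
  by (simp add: Hom_module_simps)

definition counit_inverse_up_to :: "'s \<Rightarrow> bool" where
  "counit_inverse_up_to s \<longleftrightarrow> (\<exists>\<theta>\<in>hom (add_monoid Q) MH.TG.
      (\<forall>m\<in>carrier M. \<forall>h\<in>lin_hom S M Q. \<theta> (h m) = MH.tensor (s \<odot>\<^bsub>M\<^esub> m) h) \<and>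
      (\<forall>q\<in>carrier Q. counit (\<theta> q) = s \<odot>\<^bsub>Q\<^esub> q))"

lemma counit_inverse_up_to_add:
  assumes a: "a \<in> carrier S" "counit_inverse_up_to a" and b: "b \<in> carrier S" "counit_inverse_up_to b"
  shows "counit_inverse_up_to (a \<oplus>\<^bsub>S\<^esub> b)"
proof -
  obtain \<theta>a where \<theta>a: "\<theta>a \<in> hom (add_monoid Q) MH.TG"
      "\<And>m h. \<lbrakk>m \<in> carrier M; h \<in> lin_hom S M Q\<rbrakk> \<Longrightarrow> \<theta>a (h m) = MH.tensor (a \<odot>\<^bsub>M\<^esub> m) h"
      "\<And>q. q \<in> carrier Q \<Longrightarrow> counit (\<theta>a q) = a \<odot>\<^bsub>Q\<^esub> q"
    using a(2) unfolding counit_inverse_up_to_def by blast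
  obtain \<theta>b where \<theta>b: "\<theta>b \<in> hom (add_monoid Q) MH.TG"
      "\<And>m h. \<lbrakk>m \<in> carrier M; h \<in> lin_hom S M Q\<rbrakk> \<Longrightarrow> \<theta>b (h m) = MH.tensor (b \<odot>\<^bsub>M\<^esub> m) h"
      "\<And>q. q \<in> carrier Q \<Longrightarrow> counit (\<theta>b q) = b \<odot>\<^bsub>Q\<^esub> q"
    using b(2) unfolding counit_inverse_up_to_def by blast
  show ?thesis
    unfolding counit_inverse_up_to_def
  proof (intro bexI conjI ballI)
    fix m h assume "m \<in> carrier M" "h \<in> lin_hom S M Q"
    then show "\<theta>a (h m) \<otimes>\<^bsub>MH.TG\<^esub> \<theta>b (h m) = MH.tensor ((a \<oplus>\<^bsub>S\<^esub> b) \<odot>\<^bsub>M\<^esub> m) h"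
      using a(1) b(1) \<theta>a(2) \<theta>b(2)
      by (simp add: M.smult_l_distr MH.tensor_add_left M.smult_closed Hom_module_simps)
  next
    fix q assume q: "q \<in> carrier Q"
    then have "\<theta>a q \<in> carrier MH.TG" "\<theta>b q \<in> carrier MH.TG"
      using \<theta>a(1) \<theta>b(1) by (simp_all add: hom_in_carrier)
    then show "counit (\<theta>a q \<otimes>\<^bsub>MH.TG\<^esub> \<theta>b q) = (a \<oplus>\<^bsub>S\<^esub> b) \<odot>\<^bsub>Q\<^esub> q"
      using hom_mult[OF counit_hom] q a(1) b(1) \<theta>a(3) \<theta>b(3) by (simp add: Q.smult_l_distr)
  qed (rule MH.TG.hom_group_mult[OF \<theta>a(1) \<theta>b(1)])
qed

lemma counit_inverse_up_to_value:
  assumes epi: "ring_epi R (End_ring S M) (chi M ract) TYPE((('m \<Rightarrow> 'm) \<times> nat) set)"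
    and \<phi>: "\<phi> \<in> lin_hom S M (regular_module S)" and n: "n \<in> carrier M"
  shows "counit_inverse_up_to (\<phi> n)"
proof -
  have \<phi>_closed: "\<phi> x \<in> carrier S" if "x \<in> carrier M" for x
    using lin_homD(1)[OF \<phi> that] by (simp add: regular_module_simps)
  define g where "g q = (\<lambda>x\<in>carrier M. \<phi> x \<odot>\<^bsub>Q\<^esub> q)" for q
  have g: "g q \<in> lin_hom S M Q" if "q \<in> carrier Q" for q
    unfolding g_def by (rule M.lin_hom_scale[OF Q.lmodule_axioms \<phi> that])
  show ?thesis
    unfolding counit_inverse_up_to_def
  proof (intro bexI conjI ballI)
    show "(\<lambda>q. MH.tensor n (g q)) \<in> hom (add_monoid Q) MH.TG"
    proof (rule homI)
      fix q q' assume "q \<in> carrier (add_monoid Q)" "q' \<in> carrier (add_monoid Q)"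
      moreover have "g (q \<oplus>\<^bsub>Q\<^esub> q') = g q \<oplus>\<^bsub>H\<^esub> g q'" if "q \<in> carrier Q" "q' \<in> carrier Q"
        using that by (auto simp: g_def Hom_module_simps Q.smult_r_distr \<phi>_closed intro!: restrict_ext)
      ultimately show "MH.tensor n (g (q \<otimes>\<^bsub>add_monoid Q\<^esub> q')) =
          MH.tensor n (g q) \<otimes>\<^bsub>MH.TG\<^esub> MH.tensor n (g q')"
        using n g by (simp add: MH.tensor_add_right Hom_module_simps(1))
    qed (use n g in \<open>simp add: MH.tensor_closed Hom_module_simps\<close>)
  next
    fix m h assume m: "m \<in> carrier M" and h: "h \<in> lin_hom S M Q"
    let ?e = "\<lambda>x\<in>carrier M. \<phi> x \<odot>\<^bsub>M\<^esub> m"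
    have e: "?e \<in> lin_hom S M M"
      by (rule M.lin_hom_scale[OF M.lmodule_axioms \<phi> m])
    have "precomp ?e h = g (h m)"
      using m h by (auto simp: precomp_def g_def \<phi>_closed lin_homD M.smult_closed intro!: restrict_ext)
    then show "MH.tensor n (g (h m)) = MH.tensor (\<phi> n \<odot>\<^bsub>M\<^esub> m) h"
      using tensor_End_balanced[OF epi n e h] n by simp
  next
    fix q assume "q \<in> carrier Q"
    then show "counit (MH.tensor n (g q)) = \<phi> n \<odot>\<^bsub>Q\<^esub> q"
      using n g by (simp add: counit_tensor g_def)
  qed
qed

lemma counit_inverse_up_to_one:
  assumes epi: "ring_epi R (End_ring S M) (chi M ract) TYPE((('m \<Rightarrow> 'm) \<times> nat) set)"
    and gen: "generator S M TYPE('s)"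
  shows "counit_inverse_up_to \<one>\<^bsub>S\<^esub>"
proof -
  let ?S = "regular_module S"
  let ?X = "\<Union>\<phi>\<in>lin_hom S M ?S. \<phi> ` carrier M"
  interpret S: lmodule S ?S
    by (rule lmodule_regular_module[OF M.S.ring_axioms])
  have "generates S M ?S"
    using gen S.left_module by (simp add: generator_def)
  then have carrier_S: "carrier S = generate (add_monoid ?S) ?X"
    by (simp add: generates_def regular_module_simps)
  have gens: "s \<in> carrier S \<and> counit_inverse_up_to s" if "s \<in> ?X" for s
    using that counit_inverse_up_to_value[OF epi] lin_homD(1)
    by (fastforce simp: regular_module_simps)
  have "s \<in> carrier S \<and> counit_inverse_up_to s" if "s \<in> generate (add_monoid ?S) ?X" for s
    using that
  proof (induction rule: generate.induct)
    \<comment> \<open>\<open>0\<close> and \<open>-\<phi>(n)\<close> are again values of maps \<open>M \<rightarrow> S\<close>\<close>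
    case one
    have "(\<lambda>x\<in>carrier M. \<zero>\<^bsub>?S\<^esub>) \<in> lin_hom S M ?S"
      by (rule M.lin_hom_zero[OF S.lmodule_axioms])
    then show ?case
      using gens[of "\<zero>\<^bsub>?S\<^esub>"] by (fastforce simp: regular_module_simps)
  next
    case (incl h)
    then show ?case by (rule gens)
  next
    case (inv h)
    then obtain \<phi> n where "\<phi> \<in> lin_hom S M ?S" "n \<in> carrier M" "h = \<phi> n"
      by blast
    then have "(\<lambda>x\<in>carrier M. \<ominus>\<^bsub>?S\<^esub> \<phi> x) \<in> lin_hom S M ?S" "n \<in> carrier M"
      "inv\<^bsub>add_monoid ?S\<^esub> h = (\<lambda>x\<in>carrier M. \<ominus>\<^bsub>?S\<^esub> \<phi> x) n"
      using M.lin_hom_minus[OF S.lmodule_axioms] by (simp_all add: a_inv_def)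
    then show ?case
      using gens by blast
  next
    case (eng h1 h2)
    then show ?case
      using counit_inverse_up_to_add by (simp add: regular_module_simps)
  qed
  then show ?thesis
    using carrier_S by blast
qed

theorem counit_iso:
  assumes epi: "ring_epi R (End_ring S M) (chi M ract) TYPE((('m \<Rightarrow> 'm) \<times> nat) set)"
    and gen: "generator S M TYPE('s)"
  shows "counit \<in> iso MH.TG (add_monoid Q)"
proof -
  obtain \<theta> where \<theta>: "\<theta> \<in> hom (add_monoid Q) MH.TG"
      and \<theta>_eval: "\<And>m h. \<lbrakk>m \<in> carrier M; h \<in> lin_hom S M Q\<rbrakk> \<Longrightarrow> \<theta> (h m) = MH.tensor m h"
      and counit_\<theta>: "\<And>q. q \<in> carrier Q \<Longrightarrow> counit (\<theta> q) = q"
    using counit_inverse_up_to_one[OF epi gen]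
    unfolding counit_inverse_up_to_def by (auto simp: M.smult_one Q.smult_one)
  have \<theta>_counit: "\<theta> (counit t) = t" if "t \<in> carrier MH.TG" for t
    by (rule MH.tensor_hom_eqI[OF MH.TG.is_group hom_lambda_comp[OF \<theta> counit_hom] hom_lambda_id _ that])
       (simp add: counit_tensor \<theta>_eval Hom_module_simps)
  have "bij_betw counit (carrier MH.TG) (carrier (add_monoid Q))"
    by (rule bij_betw_byWitness[of _ \<theta>])
       (use \<theta>_counit counit_\<theta> hom_in_carrier[OF counit_hom] hom_in_carrier[OF \<theta>] in auto)
  then show ?thesis
    using counit_hom by (simp add: iso_def)
qed

end

theorem proposition3p11:
  fixes R :: "'r ring" and S :: "'s ring"
    and M :: "('s, 'm) module" and ract :: "'m \<Rightarrow> 'r \<Rightarrow> 'm"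
    and Q :: "('s, 'q) module"
  assumes "ring R" and "ring S"
    and "bimodule S R M ract"
    and "generator S M TYPE('s)"
    and "ring_epi R (End_ring S M) (chi M ract) TYPE((('m \<Rightarrow> 'm) \<times> nat) set)"
    and "left_module S Q"
  shows "\<exists>\<epsilon>. \<epsilon> \<in> iso (tensor_group R M ract (Hom_module R S M ract Q)) (add_monoid Q) \<and>
           (\<forall>m\<in>carrier M. \<forall>f\<in>lin_hom S M Q.
              \<epsilon> (tens R M ract (Hom_module R S M ract Q) m f) = f m)"
proof -
  interpret coinduction S M Q R ract
  proof (intro coinduction.intro coinduction_axioms.intro lmodule.intro)
    show "left_module S M"
      using assms(3) by (simp add: bimodule_def)
    show "chi M ract \<in> ring_hom R (End_ring S M)"
      using assms(5) by (simp add: ring_epi_def)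
  qed (use assms(3,6) in auto)
  show ?thesis
    using counit_iso[OF assms(5,4)] counit_tensor by blast
qed

end
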